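(* Consider the online ranking game for SumLoss with top-1 feedback and $m=3$ objects. For every (possibly randomized) online learning algorithm, there is an adversary strategy generating relevance vectors $r_1,\dots,r_T\in\{0,1\}^3$ such that $$\mathbb{E}\Big[\sum_{t=1}^T SumLoss(\sigma_t,r_t)\Big]-\min_\sigma\sum_{t=1}^T SumLoss(\sigma,r_t)=\Omega(T^{2/3}),$$ where the expectation is over the learner's randomized actions $\sigma_t$.
   Context: Objects are $\{1,\dots,m\}$; a ranking is a permutation $\sigma$ of $[m]$ with $\sigma(i)$ the rank of object $i$. $SumLoss(\sigma,r)=\sum_{i=1}^m\sigma(i)r(i)$ for $r\in\{0,1\}^m$. The game runs for $T$ rounds: an oblivious adversary fixes $r_1,\dots,r_T$ in advance; at round $t$ the learner (possibly randomizing, based on past feedback) outputs $\sigma_t$, suffers $SumLoss(\sigma_t,r_t)$, and observes only $r_t(\sigma_t^{-1}(1))$, the relevance of the top-ranked object. *)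

theory Defs
  imports "HOL-Combinatorics.Permutations" "HOL-Probability.Probability_Mass_Function"
begin

text \<open>Objects are 1..m; a ranking sigma maps object i to its rank sigma i in 1..m.
  Relevance vectors are predicates r :: nat => bool (r i = relevance of object i).\<close>

type_synonym ranking = "nat \<Rightarrow> nat"
type_synonym relevance = "nat \<Rightarrow> bool"

definition rankings :: "nat \<Rightarrow> ranking set" where
  "rankings m = {\<sigma>. \<sigma> permutes {1..m}}"

definition SumLoss :: "nat \<Rightarrow> ranking \<Rightarrow> relevance \<Rightarrow> real" where
  "SumLoss m \<sigma> r = (\<Sum>i=1..m. real (\<sigma> i) * (if r i then 1 else 0))"

definition top_obj :: "nat \<Rightarrow> ranking \<Rightarrow> nat" where
  "top_obj m \<sigma> = inv_into {1..m} \<sigma> 1"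

text \<open>History seen by the learner: its own past rankings and the top-1 feedback bits.
  A (randomized) learner maps the history to a distribution of the next ranking.\<close>
type_synonym history = "(ranking \<times> bool) list"
type_synonym learner = "history \<Rightarrow> ranking pmf"

definition valid_learner :: "nat \<Rightarrow> learner \<Rightarrow> bool" where
  "valid_learner m L \<longleftrightarrow> (\<forall>h. set_pmf (L h) \<subseteq> rankings m)"

text \<open>Expected cumulative SumLoss of learner L, starting from history h, against the
  (obliviously fixed) remaining relevance sequence.\<close>
fun exp_loss :: "nat \<Rightarrow> learner \<Rightarrow> history \<Rightarrow> relevance list \<Rightarrow> real" where
  "exp_loss m L h [] = 0"
| "exp_loss m L h (r # rs) =
     measure_pmf.expectation (L h)
       (\<lambda>\<sigma>. SumLoss m \<sigma> r + exp_loss m L (h @ [(\<sigma>, r (top_obj m \<sigma>))]) rs)"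

definition regret :: "nat \<Rightarrow> learner \<Rightarrow> relevance list \<Rightarrow> real" where
  "regret m L rs = exp_loss m L [] rs
     - Min ((\<lambda>\<sigma>. \<Sum>r\<leftarrow>rs. SumLoss m \<sigma> r) ` rankings m)"

definition relevance_vec :: "nat \<Rightarrow> relevance \<Rightarrow> bool" where
  "relevance_vec m r \<longleftrightarrow> (\<forall>i. r i \<longrightarrow> i \<in> {1..m})"

end

theory Submission
  imports Defs
begin

text \<open>In two stochastic environments the relevance vector of every round is drawn independently:
  objects 1 and 2 are relevant with probability \<open>1/2 + e\<close> (resp. \<open>1/2 - e\<close>), otherwise objects
  1 and 3. Object 1 is always relevant, so a ranking that does not put it on top loses at least
  \<open>1/2 - e\<close> per round against the best ranking; but with object 1 on top the top-1 feedback is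
  always 1 and carries no information, and guessing the order of 2 and 3 wrongly costs \<open>2e\<close>.
  For prior weights \<open>w0, w1\<close> on the environments, induction over the horizon \<open>n\<close> shows that
  the weighted expected loss exceeds that of the best fixed rankings, \<open>(w0 + w1) n (7/2 - e)\<close>,
  by \<open>min (2 e n) G \<cdot> w0 w1 / (w0 + w1)\<close>: an uninformed round costs \<open>2 e min w0 w1\<close>, and an
  informative round shrinks the potential \<open>w0 w1 / (w0 + w1)\<close> only by the factor \<open>1 - 4 e\<^sup>2\<close>.
  With \<open>e = T^(-1/3)\<close> and \<open>G = T^(2/3)/4\<close> the uniform prior yields an average regret
  \<open>T^(2/3)/16\<close>, which some deterministic relevance sequence attains.\<close>

fun seq_avg :: "real \<Rightarrow> 'a \<Rightarrow> 'a \<Rightarrow> nat \<Rightarrow> ('a list \<Rightarrow> real) \<Rightarrow> real" where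
  "seq_avg p x y 0 f = f []"
| "seq_avg p x y (Suc n) f =
     p * seq_avg p x y n (\<lambda>rs. f (x # rs)) + (1 - p) * seq_avg p x y n (\<lambda>rs. f (y # rs))"

lemma seq_avg_add: "seq_avg p x y n (\<lambda>rs. f rs + g rs) = seq_avg p x y n f + seq_avg p x y n g"
  by (induction n arbitrary: f g) (simp_all add: algebra_simps)

lemma seq_avg_mult_left: "seq_avg p x y n (\<lambda>rs. c * f rs) = c * seq_avg p x y n f"
  by (induction n arbitrary: f) (simp_all add: algebra_simps)

lemma seq_avg_const: "seq_avg p x y n (\<lambda>_. c) = c"
  by (induction n) (simp_all add: algebra_simps)

lemma seq_avg_sum:
  "finite S \<Longrightarrow> seq_avg p x y n (\<lambda>rs. \<Sum>s\<in>S. f s rs) = (\<Sum>s\<in>S. seq_avg p x y n (f s))"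
  by (induction S rule: finite_induct) (simp_all add: seq_avg_add seq_avg_const)

lemma seq_avg_mono:
  assumes "0 \<le> p" "p \<le> 1" "\<And>rs. f rs \<le> g rs"
  shows "seq_avg p x y n f \<le> seq_avg p x y n g"
  using assms(3)
proof (induction n arbitrary: f g)
  case (Suc n)
  then show ?case
    using assms(1,2) by (simp add: add_mono mult_left_mono)
qed simp

lemma seq_avg_sum_list:
  "seq_avg p x y n (\<lambda>rs. \<Sum>r\<leftarrow>rs. g r) = real n * (p * g x + (1 - p) * g y)"
  by (induction n) (simp_all add: seq_avg_add seq_avg_const algebra_simps)

lemma seq_avg_le_witness:
  assumes "0 \<le> p" "p \<le> 1"
  shows "\<exists>rs. length rs = n \<and> set rs \<subseteq> {x, y} \<and> seq_avg p x y n f \<le> f rs"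
proof (induction n arbitrary: f)
  case 0
  then show ?case by simp
next
  case (Suc n)
  obtain xs where xs: "length xs = n" "set xs \<subseteq> {x, y}"
    "seq_avg p x y n (\<lambda>rs. f (x # rs)) \<le> f (x # xs)"
    using Suc[of "\<lambda>rs. f (x # rs)"] by blast
  obtain ys where ys: "length ys = n" "set ys \<subseteq> {x, y}"
    "seq_avg p x y n (\<lambda>rs. f (y # rs)) \<le> f (y # ys)"
    using Suc[of "\<lambda>rs. f (y # rs)"] by blast
  have "seq_avg p x y (Suc n) f \<le> p * f (x # xs) + (1 - p) * f (y # ys)"
    using xs(3) ys(3) assms by (simp add: add_mono mult_left_mono)
  also have "\<dots> \<le> max (f (x # xs)) (f (y # ys))"
    using assms convex_bound_le[of "f (x # xs)" "max (f (x # xs)) (f (y # ys))" "f (y # ys)" p "1 - p"]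
    by simp
  finally have "seq_avg p x y (Suc n) f \<le> max (f (x # xs)) (f (y # ys))" .
  moreover have "length (x # xs) = Suc n" "set (x # xs) \<subseteq> {x, y}"
    "length (y # ys) = Suc n" "set (y # ys) \<subseteq> {x, y}"
    using xs(1,2) ys(1,2) by auto
  ultimately show ?case
    by (metis max_def)
qed

lemma finite_rankings: "finite (rankings m)"
  unfolding rankings_def by (rule finite_permutations) simp

lemma top_obj_eqI:
  assumes "\<sigma> \<in> rankings m" "i \<in> {1..m}" "\<sigma> i = 1"
  shows "top_obj m \<sigma> = i"
proof -
  have "inj_on \<sigma> {1..m}"
    using assms(1) permutes_inj_on unfolding rankings_def by blast
  then show ?thesis
    unfolding top_obj_def using inv_into_f_f[of \<sigma> "{1..m}" i] assms(2,3) by simp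
qed

lemma seq_avg_exp_loss_Suc:
  assumes "valid_learner m L"
  shows "seq_avg p x y (Suc n) (exp_loss m L h) =
    (\<Sum>\<sigma>\<in>rankings m. pmf (L h) \<sigma> *
       (p * (SumLoss m \<sigma> x + seq_avg p x y n (exp_loss m L (h @ [(\<sigma>, x (top_obj m \<sigma>))])))
        + (1 - p) * (SumLoss m \<sigma> y + seq_avg p x y n (exp_loss m L (h @ [(\<sigma>, y (top_obj m \<sigma>))])))))"
proof -
  have support: "set_pmf (L h) \<subseteq> rankings m"
    using assms by (simp add: valid_learner_def)
  have exp_loss_Cons: "exp_loss m L h (r # rs) = (\<Sum>\<sigma>\<in>rankings m. pmf (L h) \<sigma> *
      (SumLoss m \<sigma> r + exp_loss m L (h @ [(\<sigma>, r (top_obj m \<sigma>))]) rs))" for r rs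
    using support
    by (simp, subst integral_measure_pmf_real[OF finite_rankings]) (auto simp: mult.commute)
  have avg_Cons: "seq_avg p x y n (\<lambda>rs. exp_loss m L h (r # rs)) = (\<Sum>\<sigma>\<in>rankings m. pmf (L h) \<sigma> *
      (SumLoss m \<sigma> r + seq_avg p x y n (exp_loss m L (h @ [(\<sigma>, r (top_obj m \<sigma>))]))))" for r
    unfolding exp_loss_Cons
    by (simp add: seq_avg_sum[OF finite_rankings] seq_avg_mult_left seq_avg_add seq_avg_const)
  show ?thesis
    unfolding seq_avg.simps(2) avg_Cons by (simp add: sum_distrib_left sum.distrib sum_subtractf algebra_simps)
qed

lemma regret_ge_fixed_ranking:
  assumes "\<tau> \<in> rankings m"
  shows "exp_loss m L [] rs - (\<Sum>r\<leftarrow>rs. SumLoss m \<tau> r) \<le> regret m L rs"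
proof -
  have "Min ((\<lambda>\<sigma>. \<Sum>r\<leftarrow>rs. SumLoss m \<sigma> r) ` rankings m) \<le> (\<Sum>r\<leftarrow>rs. SumLoss m \<tau> r)"
    using assms finite_rankings by (intro Min_le) auto
  then show ?thesis
    unfolding regret_def by simp
qed

lemma seq_avg_regret_ge:
  assumes "\<tau> \<in> rankings m" "0 \<le> p" "p \<le> 1"
  shows "seq_avg p x y n (exp_loss m L []) - real n * (p * SumLoss m \<tau> x + (1 - p) * SumLoss m \<tau> y)
    \<le> seq_avg p x y n (regret m L)"
proof -
  have "seq_avg p x y n (exp_loss m L [])
      \<le> seq_avg p x y n (\<lambda>rs. regret m L rs + (\<Sum>r\<leftarrow>rs. SumLoss m \<tau> r))"
    using regret_ge_fixed_ranking[OF assms(1)] assms(2,3)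
    by (intro seq_avg_mono) (auto simp: algebra_simps)
  then show ?thesis
    by (simp add: seq_avg_add seq_avg_sum_list)
qed

lemma atLeastAtMost_1_3: "{1..3::nat} = {1, 2, 3}"
  by auto

lemma rankings_3_cases:
  assumes "\<sigma> \<in> rankings 3"
  shows "(\<sigma> 1, \<sigma> 2, \<sigma> 3) \<in> {(1,2,3), (1,3,2), (2,1,3), (2,3,1), (3,1,2), (3,2,1)}"
proof -
  have p: "\<sigma> permutes {1, 2, 3}"
    using assms unfolding rankings_def atLeastAtMost_1_3 by simp
  have "\<sigma> 1 \<in> {1, 2, 3}" "\<sigma> 2 \<in> {1, 2, 3}" "\<sigma> 3 \<in> {1, 2, 3}"
    using permutes_in_image[OF p] by auto
  moreover have "\<sigma> 1 \<noteq> \<sigma> 2" "\<sigma> 1 \<noteq> \<sigma> 3" "\<sigma> 2 \<noteq> \<sigma> 3"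
    using permutes_inj[OF p] by (simp_all add: inj_eq)
  ultimately show ?thesis
    unfolding insert_iff empty_iff by (elim disjE) simp_all
qed

definition rel12 :: relevance where "rel12 = (\<lambda>i. i = 1 \<or> i = 2)"
definition rel13 :: relevance where "rel13 = (\<lambda>i. i = 1 \<or> i = 3)"

lemma relevance_vec_rel12: "relevance_vec 3 rel12"
  and relevance_vec_rel13: "relevance_vec 3 rel13"
  by (auto simp: relevance_vec_def rel12_def rel13_def)

lemma SumLoss_rel12: "SumLoss 3 \<sigma> rel12 = real (\<sigma> 1) + real (\<sigma> 2)"
  and SumLoss_rel13: "SumLoss 3 \<sigma> rel13 = real (\<sigma> 1) + real (\<sigma> 3)"
  unfolding SumLoss_def rel12_def rel13_def atLeastAtMost_1_3 by simp_all

definition round_loss :: "real \<Rightarrow> ranking \<Rightarrow> real" where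
  "round_loss p \<sigma> = p * SumLoss 3 \<sigma> rel12 + (1 - p) * SumLoss 3 \<sigma> rel13"

lemma round_loss_id: "round_loss (1/2 + e) id = 7/2 - e"
  and round_loss_transpose_2_3: "round_loss (1/2 - e) (Transposition.transpose 2 3) = 7/2 - e"
  by (simp_all add: round_loss_def SumLoss_rel12 SumLoss_rel13 Transposition.transpose_def algebra_simps)

lemma round_loss_top1:
  assumes "\<sigma> \<in> rankings 3" "\<sigma> 1 = 1" "0 \<le> e" "0 \<le> w0" "0 \<le> w1"
  shows "(w0 + w1) * (7/2 - e) + 2 * e * min w0 w1
    \<le> w0 * round_loss (1/2 + e) \<sigma> + w1 * round_loss (1/2 - e) \<sigma>"
proof -
  have min_le: "2 * e * min w0 w1 \<le> 2 * e * w0" "2 * e * min w0 w1 \<le> 2 * e * w1"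
    using assms(3) by (simp_all add: mult_left_mono)
  consider "\<sigma> 2 = 2" "\<sigma> 3 = 3" | "\<sigma> 2 = 3" "\<sigma> 3 = 2"
    using rankings_3_cases[OF assms(1)] assms(2) by auto
  then show ?thesis
  proof cases
    case 1
    then have "w0 * round_loss (1/2 + e) \<sigma> + w1 * round_loss (1/2 - e) \<sigma>
        = (w0 + w1) * (7/2 - e) + 2 * e * w1"
      using assms(2) by (simp add: round_loss_def SumLoss_rel12 SumLoss_rel13 algebra_simps)
    then show ?thesis
      using min_le by linarith
  next
    case 2
    then have "w0 * round_loss (1/2 + e) \<sigma> + w1 * round_loss (1/2 - e) \<sigma>
        = (w0 + w1) * (7/2 - e) + 2 * e * w0"
      using assms(2) by (simp add: round_loss_def SumLoss_rel12 SumLoss_rel13 algebra_simps)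
    then show ?thesis
      using min_le by linarith
  qed
qed

lemma round_loss_not_top1:
  assumes "\<sigma> \<in> rankings 3" "\<sigma> 1 \<noteq> 1"
  shows "4 - 2 * \<bar>e\<bar> \<le> round_loss (1/2 + e) \<sigma>"
  using rankings_3_cases[OF assms(1)] assms(2) unfolding insert_iff empty_iff
  by (elim disjE) (auto simp: round_loss_def SumLoss_rel12 SumLoss_rel13 abs_if algebra_simps)

definition parallel_sum :: "real \<Rightarrow> real \<Rightarrow> real" where
  "parallel_sum x y = x * y / (x + y)"

lemma parallel_sum_nonneg: "0 \<le> x \<Longrightarrow> 0 \<le> y \<Longrightarrow> 0 \<le> parallel_sum x y"
  by (simp add: parallel_sum_def)

lemma parallel_sum_le_min:
  assumes "0 \<le> x" "0 \<le> y"
  shows "parallel_sum x y \<le> min x y"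
proof (cases "x + y = 0")
  case False
  then have "0 < x + y"
    using assms by simp
  then show ?thesis
    using assms by (simp add: parallel_sum_def divide_le_eq algebra_simps)
qed (use assms in \<open>simp add: parallel_sum_def\<close>)

lemma parallel_sum_le_quarter:
  assumes "0 \<le> x" "0 \<le> y"
  shows "parallel_sum x y \<le> (x + y) / 4"
proof (cases "x + y = 0")
  case False
  then have "0 < x + y"
    using assms by simp
  moreover have "4 * (x * y) \<le> (x + y) * (x + y)"
    using sum_squares_ge_zero[of "x - y" 0] by (simp add: algebra_simps power2_eq_square)
  ultimately show ?thesis
    by (simp add: parallel_sum_def divide_le_eq)
qed (simp add: parallel_sum_def)

lemma parallel_sum_split:
  assumes "0 \<le> x" "0 \<le> y" "0 \<le> a" "0 \<le> b" "a + b = 1"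
  shows "4 * a * b * parallel_sum x y \<le> parallel_sum (x * a) (y * b) + parallel_sum (x * b) (y * a)"
proof (cases "x = 0 \<or> y = 0")
  case True
  then show ?thesis
    by (auto simp: parallel_sum_def)
next
  case False
  then have "0 < x" "0 < y"
    using assms by auto
  define D1 where "D1 = x * a + y * b"
  define D2 where "D2 = x * b + y * a"
  have "min x y * a + min x y * b \<le> D1" "min x y * b + min x y * a \<le> D2"
    using assms(3,4) unfolding D1_def D2_def by (simp_all add: add_mono mult_right_mono)
  moreover have "min x y * a + min x y * b = min x y"
    using assms(5) by (simp flip: distrib_left)
  ultimately have D_pos: "0 < D1" "0 < D2"
    using \<open>0 < x\<close> \<open>0 < y\<close> by linarith+
  have "D1 + D2 = (x + y) * (a + b)"
    unfolding D1_def D2_def by (simp add: algebra_simps)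
  then have D_sum: "D1 + D2 = x + y"
    using assms(5) by simp
  have "4 * (D1 * D2) \<le> (D1 + D2)\<^sup>2"
    using sum_squares_ge_zero[of "D1 - D2" 0] by (simp add: algebra_simps power2_eq_square)
  have quad: "q * s / (s\<^sup>2 / 4) = 4 * q / s" if "0 < s" for q s :: real
    using that by (simp add: field_simps power2_eq_square)
  have "4 * a * b * parallel_sum x y = 4 * (x * y * a * b) / (D1 + D2)"
    unfolding parallel_sum_def D_sum by (simp add: mult_ac)
  also have "\<dots> = x * y * a * b * (D1 + D2) / ((D1 + D2)\<^sup>2 / 4)"
    using quad[of "D1 + D2" "x * y * a * b"] D_pos by simp
  also have "\<dots> \<le> x * y * a * b * (D1 + D2) / (D1 * D2)"
    using \<open>4 * (D1 * D2) \<le> _\<close> D_pos \<open>0 < x\<close> \<open>0 < y\<close> assms(3,4)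
    by (intro divide_left_mono) auto
  also have "\<dots> = x * y * a * b / D1 + x * y * a * b / D2"
    using D_pos by (simp add: field_simps)
  also have "\<dots> = parallel_sum (x * a) (y * b) + parallel_sum (x * b) (y * a)"
    by (simp add: parallel_sum_def D1_def D2_def mult_ac add.commute)
  finally show ?thesis .
qed

definition potential :: "real \<Rightarrow> real \<Rightarrow> nat \<Rightarrow> real \<Rightarrow> real \<Rightarrow> real" where
  "potential e G n w0 w1 =
     (w0 + w1) * real n * (7/2 - e) + min (2 * e * real n) G * parallel_sum w0 w1"

lemma min_Suc_le: "0 \<le> e \<Longrightarrow> min (2 * e * real (Suc n)) G \<le> min (2 * e * real n) G + 2 * e"
  by (simp add: algebra_simps)

lemma potential_Suc_le_exploit:
  assumes "0 \<le> e" "0 \<le> w0" "0 \<le> w1"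
  shows "potential e G (Suc n) w0 w1
    \<le> (w0 + w1) * (7/2 - e) + 2 * e * min w0 w1 + potential e G n w0 w1"
proof -
  define H where "H = parallel_sum w0 w1"
  have H: "0 \<le> H" "H \<le> min w0 w1"
    using assms(2,3) parallel_sum_nonneg parallel_sum_le_min unfolding H_def by auto
  have "min (2 * e * real (Suc n)) G * H \<le> (min (2 * e * real n) G + 2 * e) * H"
    using min_Suc_le[OF assms(1)] H(1) by (rule mult_right_mono)
  moreover have "2 * e * H \<le> 2 * e * min w0 w1"
    using H(2) assms(1) by (simp add: mult_left_mono)
  moreover have "(w0 + w1) * real (Suc n) * (7/2 - e)
      = (w0 + w1) * real n * (7/2 - e) + (w0 + w1) * (7/2 - e)"
    by (simp add: algebra_simps)
  ultimately show ?thesis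
    unfolding potential_def H_def[symmetric] by (simp add: distrib_right)
qed

lemma potential_Suc_le_explore:
  assumes "0 \<le> e" "e \<le> 1/6" "0 \<le> G" "4 * e\<^sup>2 * G \<le> 1" "0 \<le> w0" "0 \<le> w1"
  shows "potential e G (Suc n) w0 w1
    \<le> (w0 + w1) * (4 - 2 * e) + potential e G n (w0 * (1/2 + e)) (w1 * (1/2 - e))
       + potential e G n (w0 * (1/2 - e)) (w1 * (1/2 + e))"
proof -
  define g where "g = min (2 * e * real n) G"
  define H where "H = parallel_sum w0 w1"
  define Ha where "Ha = parallel_sum (w0 * (1/2 + e)) (w1 * (1/2 - e))"
  define Hb where "Hb = parallel_sum (w0 * (1/2 - e)) (w1 * (1/2 + e))"
  have g: "0 \<le> g" "4 * e\<^sup>2 * g \<le> 1"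
    using assms(1,3,4) order_trans[OF mult_left_mono[of g G "4 * e\<^sup>2"]]
    unfolding g_def by auto
  have H: "0 \<le> H" "H \<le> (w0 + w1) / 4"
    using assms(5,6) parallel_sum_nonneg parallel_sum_le_quarter unfolding H_def by auto
  have "min (2 * e * real (Suc n)) G * H \<le> g * H + 2 * e * H"
    using mult_right_mono[OF min_Suc_le[OF assms(1)] H(1)] unfolding g_def by (simp add: algebra_simps)
  moreover have "g * ((1 - 4 * e\<^sup>2) * H) \<le> g * (Ha + Hb)"
  proof (rule mult_left_mono[OF _ g(1)])
    have "4 * (1/2 + e) * (1/2 - e) = 1 - 4 * e\<^sup>2"
      by (simp add: algebra_simps power2_eq_square)
    then show "(1 - 4 * e\<^sup>2) * H \<le> Ha + Hb"
      using parallel_sum_split[of w0 w1 "1/2 + e" "1/2 - e"] assms(1,2,5,6)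
      unfolding H_def Ha_def Hb_def by simp
  qed
  moreover have "4 * e\<^sup>2 * g * H \<le> H"
    using mult_right_mono[OF g(2) H(1)] by simp
  moreover have "(2 * e + 1) * H \<le> (w0 + w1) * (1/2 - e)"
  proof -
    have "(2 * e + 1) * H \<le> (2 * e + 1) * ((w0 + w1) / 4)"
      using H(2) assms(1) by (simp add: mult_left_mono)
    also have "\<dots> = (w0 + w1) * ((2 * e + 1) / 4)"
      by simp
    also have "\<dots> \<le> (w0 + w1) * (1/2 - e)"
      using assms(2,5,6) by (intro mult_left_mono) auto
    finally show ?thesis .
  qed
  ultimately show ?thesis
    unfolding potential_def g_def[symmetric] H_def[symmetric] Ha_def[symmetric] Hb_def[symmetric]
    by (simp add: algebra_simps)
qed

abbreviation env_avg :: "real \<Rightarrow> nat \<Rightarrow> (relevance list \<Rightarrow> real) \<Rightarrow> real" where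
  "env_avg p \<equiv> seq_avg p rel12 rel13"

definition step_loss :: "history \<Rightarrow> real \<Rightarrow> (history \<Rightarrow> real) \<Rightarrow> ranking \<Rightarrow> real" where
  "step_loss h p A \<sigma> =
     p * (SumLoss 3 \<sigma> rel12 + A (h @ [(\<sigma>, rel12 (top_obj 3 \<sigma>))]))
     + (1 - p) * (SumLoss 3 \<sigma> rel13 + A (h @ [(\<sigma>, rel13 (top_obj 3 \<sigma>))]))"

lemma env_avg_exp_loss_Suc:
  assumes "valid_learner 3 L"
  shows "env_avg p (Suc n) (exp_loss 3 L h)
    = (\<Sum>\<sigma>\<in>rankings 3. pmf (L h) \<sigma> * step_loss h p (\<lambda>h'. env_avg p n (exp_loss 3 L h')) \<sigma>)"
  unfolding seq_avg_exp_loss_Suc[OF assms] step_loss_def ..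

lemma potential_Suc_le_step_loss:
  assumes e: "0 \<le> e" "e \<le> 1/6" and G: "0 \<le> G" "4 * e\<^sup>2 * G \<le> 1"
    and w: "0 \<le> w0" "0 \<le> w1" and \<sigma>: "\<sigma> \<in> rankings 3"
    and IH: "\<And>v0 v1 h'. 0 \<le> v0 \<Longrightarrow> 0 \<le> v1 \<Longrightarrow> potential e G n v0 v1 \<le> v0 * A h' + v1 * B h'"
  shows "potential e G (Suc n) w0 w1 \<le> w0 * step_loss h (1/2 + e) A \<sigma> + w1 * step_loss h (1/2 - e) B \<sigma>"
proof -
  define h12 where "h12 = h @ [(\<sigma>, rel12 (top_obj 3 \<sigma>))]"
  define h13 where "h13 = h @ [(\<sigma>, rel13 (top_obj 3 \<sigma>))]"
  have split: "w0 * step_loss h (1/2 + e) A \<sigma> + w1 * step_loss h (1/2 - e) B \<sigma>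
    = w0 * round_loss (1/2 + e) \<sigma> + w1 * round_loss (1/2 - e) \<sigma>
      + (w0 * (1/2 + e) * A h12 + w1 * (1/2 - e) * B h12)
      + (w0 * (1/2 - e) * A h13 + w1 * (1/2 + e) * B h13)"
    by (simp add: step_loss_def round_loss_def h12_def h13_def algebra_simps)
  show ?thesis
  proof (cases "\<sigma> 1 = 1")
    case True
    then have "h12 = h13"
      using top_obj_eqI[OF \<sigma>, of 1] by (simp add: h12_def h13_def rel12_def rel13_def)
    then have "w0 * step_loss h (1/2 + e) A \<sigma> + w1 * step_loss h (1/2 - e) B \<sigma>
      = w0 * round_loss (1/2 + e) \<sigma> + w1 * round_loss (1/2 - e) \<sigma> + (w0 * A h12 + w1 * B h12)"
      unfolding split by (simp add: algebra_simps)
    then show ?thesis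
      using round_loss_top1[OF \<sigma> True e(1) w] IH[OF w, of h12]
        potential_Suc_le_exploit[OF e(1) w, of G n]
      by linarith
  next
    case False
    have "w0 * (4 - 2 * e) \<le> w0 * round_loss (1/2 + e) \<sigma>"
      using round_loss_not_top1[OF \<sigma> False, of e] e(1) w(1) by (simp add: mult_left_mono)
    moreover have "w1 * (4 - 2 * e) \<le> w1 * round_loss (1/2 - e) \<sigma>"
      using round_loss_not_top1[OF \<sigma> False, of "- e"] e(1) w(2) by (simp add: mult_left_mono)
    moreover have "potential e G n (w0 * (1/2 + e)) (w1 * (1/2 - e))
        \<le> w0 * (1/2 + e) * A h12 + w1 * (1/2 - e) * B h12"
      using IH w e by simp
    moreover have "potential e G n (w0 * (1/2 - e)) (w1 * (1/2 + e))
        \<le> w0 * (1/2 - e) * A h13 + w1 * (1/2 + e) * B h13"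
      using IH w e by simp
    ultimately show ?thesis
      using split potential_Suc_le_explore[OF e G w, of n] by (simp add: algebra_simps)
  qed
qed

lemma potential_le_weighted_loss:
  assumes L: "valid_learner 3 L" and e: "0 \<le> e" "e \<le> 1/6" and G: "0 \<le> G" "4 * e\<^sup>2 * G \<le> 1"
    and w: "0 \<le> w0" "0 \<le> w1"
  shows "potential e G n w0 w1
    \<le> w0 * env_avg (1/2 + e) n (exp_loss 3 L h) + w1 * env_avg (1/2 - e) n (exp_loss 3 L h)"
  using w
proof (induction n arbitrary: h w0 w1)
  case 0
  show ?case
    using G(1) by (simp add: potential_def)
next
  case (Suc n)
  define A where "A p h' = env_avg p n (exp_loss 3 L h')" for p h'
  have support: "set_pmf (L h) \<subseteq> rankings 3"
    using L by (simp add: valid_learner_def)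
  have "potential e G (Suc n) w0 w1
      = (\<Sum>\<sigma>\<in>rankings 3. pmf (L h) \<sigma> * potential e G (Suc n) w0 w1)"
    using sum_pmf_eq_1[OF finite_rankings support] by (simp flip: sum_distrib_right)
  also have "\<dots> \<le> (\<Sum>\<sigma>\<in>rankings 3. pmf (L h) \<sigma> *
      (w0 * step_loss h (1/2 + e) (A (1/2 + e)) \<sigma> + w1 * step_loss h (1/2 - e) (A (1/2 - e)) \<sigma>))"
    using potential_Suc_le_step_loss[OF e G Suc.prems _ Suc.IH] unfolding A_def
    by (intro sum_mono mult_left_mono) auto
  also have "\<dots> = w0 * env_avg (1/2 + e) (Suc n) (exp_loss 3 L h)
      + w1 * env_avg (1/2 - e) (Suc n) (exp_loss 3 L h)"
    unfolding env_avg_exp_loss_Suc[OF L] A_def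
    by (simp add: sum_distrib_left sum.distrib distrib_left mult.left_commute)
  finally show ?case .
qed

lemma hard_sequence_exists:
  assumes L: "valid_learner 3 L" and e: "0 \<le> e" "e \<le> 1/6" and G: "0 \<le> G" "4 * e\<^sup>2 * G \<le> 1"
  shows "\<exists>rs. length rs = n \<and> set rs \<subseteq> {rel12, rel13} \<and> min (2 * e * real n) G / 4 \<le> regret 3 L rs"
proof -
  have id: "id \<in> rankings 3" and swap: "Transposition.transpose 2 3 \<in> rankings 3"
    unfolding rankings_def by (auto intro: permutes_id permutes_swap_id)
  have "potential e G n (1/2) (1/2)
      \<le> 1/2 * env_avg (1/2 + e) n (exp_loss 3 L []) + 1/2 * env_avg (1/2 - e) n (exp_loss 3 L [])"
    using potential_le_weighted_loss[OF L e G, of "1/2" "1/2" n "[]"] by simp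
  moreover have "potential e G n (1/2) (1/2) = real n * (7/2 - e) + min (2 * e * real n) G / 4"
    by (simp add: potential_def parallel_sum_def)
  moreover have "env_avg (1/2 + e) n (exp_loss 3 L []) - real n * (7/2 - e)
      \<le> env_avg (1/2 + e) n (regret 3 L)"
    using seq_avg_regret_ge[OF id, of "1/2 + e" rel12 rel13 n L] e round_loss_id[of e]
    unfolding round_loss_def by simp
  moreover have "env_avg (1/2 - e) n (exp_loss 3 L []) - real n * (7/2 - e)
      \<le> env_avg (1/2 - e) n (regret 3 L)"
    using seq_avg_regret_ge[OF swap, of "1/2 - e" rel12 rel13 n L] e round_loss_transpose_2_3[of e]
    unfolding round_loss_def by simp
  ultimately have "min (2 * e * real n) G / 4 \<le> env_avg (1/2 + e) n (regret 3 L)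
      \<or> min (2 * e * real n) G / 4 \<le> env_avg (1/2 - e) n (regret 3 L)"
    by linarith
  then obtain p where "0 \<le> p" "p \<le> 1" "min (2 * e * real n) G / 4 \<le> env_avg p n (regret 3 L)"
    using e by (elim disjE) (rule that, simp_all)+
  then show ?thesis
    using seq_avg_le_witness[of p n rel12 rel13 "regret 3 L"] by (meson order_trans)
qed

theorem corollary1:
  "\<exists>c>0. \<exists>T0::nat. \<forall>T\<ge>T0. \<forall>L. valid_learner 3 L \<longrightarrow>
     (\<exists>rs. length rs = T \<and> (\<forall>r\<in>set rs. relevance_vec 3 r) \<and>
           regret 3 L rs \<ge> c * real T powr (2/3))"
proof (intro exI[of _ "1/16"] conjI exI[of _ "216::nat"] allI impI)
  fix T :: nat and L
  assume T: "216 \<le> T" and L: "valid_learner 3 L"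
  define t where "t = real T powr (1/3)"
  have t_pos: "0 < t"
    using T by (simp add: t_def)
  have t_cube: "t ^ 3 = real T" and t_sq: "t\<^sup>2 = real T powr (2/3)"
    using T by (simp_all add: t_def powr_powr flip: powr_realpow)
  have "6 ^ 3 \<le> t ^ 3"
    using T t_cube by simp
  then have t_ge: "6 \<le> t"
    using t_pos power_mono_iff[of 6 t 3] by simp
  define e where "e = 1 / t"
  define G where "G = t\<^sup>2 / 4"
  have e: "0 \<le> e" "e \<le> 1/6" and G: "0 \<le> G" "4 * e\<^sup>2 * G \<le> 1"
    using t_pos t_ge by (simp_all add: e_def G_def field_simps power2_eq_square)
  have "min (2 * e * real T) G = G"
    using t_pos unfolding e_def G_def t_cube[symmetric] by (simp add: power2_eq_square power3_eq_cube)
  then obtain rs where "length rs = T" "set rs \<subseteq> {rel12, rel13}" "G / 4 \<le> regret 3 L rs"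
    using hard_sequence_exists[OF L e G, of T] by auto
  then show "\<exists>rs. length rs = T \<and> (\<forall>r\<in>set rs. relevance_vec 3 r) \<and>
      1/16 * real T powr (2/3) \<le> regret 3 L rs"
    using relevance_vec_rel12 relevance_vec_rel13 by (auto simp: G_def t_sq)
qed simp

end
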